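(* The group $G$ contains 3-cycles.
   Context: Fix $m\in\mathbb{N}$, a prime power $q$, and $n\geq 3$. Let $\Delta=\mathrm{Gal}(\mathbb{F}_{q^m}:\mathbb{F}_q)$ act coordinatewise on $\mathbb{F}_{q^m}^n$; $\mathcal{X}$ is the union of orbits of size $m$, $\bar{\mathcal{X}}$ the set of these orbits. The tame automorphism group $\mathrm{TA}_n(\mathbb{F}_q)$ (generated by invertible affine maps and triangular maps $(a_1X_1+f_1,\dots,a_nX_n+f_n)$, $a_i\in\mathbb{F}_q^*$, $f_i\in\mathbb{F}_q[X_{i+1},\dots,X_n]$) acts on $\bar{\mathcal{X}}$, and $G$ is the image of $\mathrm{TA}_n(\mathbb{F}_q)\to\mathrm{Sym}(\bar{\mathcal{X}})$. *)

theory Defs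
  imports "HOL-Computational_Algebra.Primes"
begin

text \<open>Vectors of F_{q^m}^n are functions nat => 'a vanishing from index n on.
  The base field F_q is the fixed field of x |-> x^q inside the finite field 'a
  with q^m elements.\<close>

definition vecs :: "nat \<Rightarrow> (nat \<Rightarrow> 'a::zero) set" where
  "vecs n = {v. \<forall>i\<ge>n. v i = 0}"

definition baseF :: "nat \<Rightarrow> ('a::field) set" where
  "baseF q = {x. x ^ q = x}"

definition Gal :: "nat \<Rightarrow> ('a::field \<Rightarrow> 'a) set" where
  "Gal q = {s. bij s \<and> (\<forall>x y. s (x + y) = s x + s y) \<and> (\<forall>x y. s (x * y) = s x * s y)
              \<and> s 1 = 1 \<and> (\<forall>x\<in>baseF q. s x = x)}"

definition orbit :: "nat \<Rightarrow> (nat \<Rightarrow> 'a::field) \<Rightarrow> (nat \<Rightarrow> 'a) set" where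
  "orbit q v = {(\<lambda>i. s (v i)) | s. s \<in> Gal q}"

definition Xset :: "nat \<Rightarrow> nat \<Rightarrow> nat \<Rightarrow> (nat \<Rightarrow> 'a::field) set" where
  "Xset q m n = {v \<in> vecs n. card (orbit q v) = m}"

definition Xbar :: "nat \<Rightarrow> nat \<Rightarrow> nat \<Rightarrow> (nat \<Rightarrow> 'a::field) set set" where
  "Xbar q m n = orbit q ` Xset q m n"

inductive_set polyfun :: "'a::field set \<Rightarrow> nat set \<Rightarrow> ((nat \<Rightarrow> 'a) \<Rightarrow> 'a) set"
  for K :: "'a set" and S :: "nat set" where
  const: "c \<in> K \<Longrightarrow> (\<lambda>v. c) \<in> polyfun K S"
| var: "j \<in> S \<Longrightarrow> (\<lambda>v. v j) \<in> polyfun K S"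
| add: "f \<in> polyfun K S \<Longrightarrow> g \<in> polyfun K S \<Longrightarrow> (\<lambda>v. f v + g v) \<in> polyfun K S"
| mult: "f \<in> polyfun K S \<Longrightarrow> g \<in> polyfun K S \<Longrightarrow> (\<lambda>v. f v * g v) \<in> polyfun K S"

definition affine_maps :: "nat \<Rightarrow> nat \<Rightarrow> ((nat \<Rightarrow> 'a::field) \<Rightarrow> (nat \<Rightarrow> 'a)) set" where
  "affine_maps q n = {(\<lambda>v i. if i < n then (\<Sum>j<n. A i j * v j) + b i else 0) | A b.
      (\<forall>i<n. \<forall>j<n. A i j \<in> baseF q) \<and> (\<forall>i<n. b i \<in> baseF q) \<and>
      bij_betw (\<lambda>v i. if i < n then (\<Sum>j<n. A i j * v j) else 0)
        {v \<in> vecs n. \<forall>i. v i \<in> baseF q} {v \<in> vecs n. \<forall>i. v i \<in> baseF q}}"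

text \<open>Triangular maps (a_1 X_1 + f_1, ..., a_n X_n + f_n), 0-based indices,
  a_i in F_q nonzero, f_i in F_q[X_{i+1},...,X_{n-1}].\<close>
definition triangular_maps :: "nat \<Rightarrow> nat \<Rightarrow> ((nat \<Rightarrow> 'a::field) \<Rightarrow> (nat \<Rightarrow> 'a)) set" where
  "triangular_maps q n = {(\<lambda>v i. if i < n then a i * v i + f i v else 0) | a f.
      (\<forall>i<n. a i \<in> baseF q \<and> a i \<noteq> 0) \<and> (\<forall>i<n. f i \<in> polyfun (baseF q) {i+1..<n})}"

definition tame_gens :: "nat \<Rightarrow> nat \<Rightarrow> ((nat \<Rightarrow> 'a::field) \<Rightarrow> (nat \<Rightarrow> 'a)) set" where
  "tame_gens q n = affine_maps q n \<union> triangular_maps q n"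

text \<open>G: image of TA_n(F_q) in Sym(Xbar), generated by the permutations
  Y |-> F ` Y induced by the generators (finite, so monoid closure = group closure).
  Elements are considered only through their values on Xbar.\<close>
inductive_set Gimg :: "nat \<Rightarrow> nat \<Rightarrow> ((nat \<Rightarrow> 'a::field) set \<Rightarrow> (nat \<Rightarrow> 'a) set) set"
  for q :: nat and n :: nat where
  id: "(\<lambda>Y. Y) \<in> Gimg q n"
| step: "g \<in> Gimg q n \<Longrightarrow> F \<in> tame_gens q n \<Longrightarrow> (\<lambda>Y. F ` (g Y)) \<in> Gimg q n"

definition is_3cycle_on :: "'b set \<Rightarrow> ('b \<Rightarrow> 'b) \<Rightarrow> bool" where
  "is_3cycle_on X g \<longleftrightarrow> (\<exists>a\<in>X. \<exists>b\<in>X. \<exists>c\<in>X. a \<noteq> b \<and> b \<noteq> c \<and> a \<noteq> c \<and>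
      g a = b \<and> g b = c \<and> g c = a \<and> (\<forall>x\<in>X - {a, b, c}. g x = x))"

end

theory Submission
  imports Defs "HOL-Number_Theory.Residues" "HOL-Computational_Algebra.Polynomial"
begin

text \<open>
  Choose \<open>\<theta>\<close> in the field with \<open>q^m\<close> elements whose Frobenius conjugates
  \<open>\<theta>^(q^j)\<close>, \<open>j < m\<close>, are pairwise distinct (such elements exist by counting roots of
  \<open>x^(q^j) - x\<close>). The vectors \<open>(a, b, 0, ..., 0, t)\<close> with \<open>a, b\<close> in the base field
  and \<open>t\<close> a conjugate of \<open>\<theta>\<close> then form Galois orbits of size \<open>m\<close>. Since
  \<open>1 - y^(q^m - 1)\<close> is the indicator of \<open>y = 0\<close>, the triangular map \<open>\<alpha>\<close> adding
  to the first coordinate the indicator of "second coordinate zero and the vector lies in this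
  slice" is tame, and so is its conjugate \<open>\<beta>\<close> by the swap of the first two coordinates.
  Tame maps have coefficients in the base field, hence commute with the Galois action and map
  orbits to orbits. The commutator \<open>\<alpha> \<beta> \<alpha>\<inverse> \<beta>\<inverse>\<close> fixes every vector outside
  the slice and acts on the first two coordinates of slice vectors as the 3-cycle
  \<open>(0,0) \<mapsto> (1,0) \<mapsto> (0,1) \<mapsto> (0,0)\<close>, so it induces a 3-cycle on the orbits.
\<close>

section \<open>The Galois group and its orbits\<close>

lemma baseF_0 [simp]: "q > 0 \<Longrightarrow> (0::'a::field) \<in> baseF q"
  by (simp add: baseF_def)

lemma baseF_1 [simp]: "(1::'a::field) \<in> baseF q"
  by (simp add: baseF_def)

lemma baseF_power_iterate: "x \<in> baseF q \<Longrightarrow> (x::'a::field) ^ (q ^ j) = x"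
  by (induction j) (auto simp: baseF_def power_mult)

lemma Gal_add: "s \<in> Gal q \<Longrightarrow> s ((x::'a::field) + y) = s x + s y"
  and Gal_mult: "s \<in> Gal q \<Longrightarrow> s ((x::'a::field) * y) = s x * s y"
  and Gal_fixes_baseF: "s \<in> Gal q \<Longrightarrow> x \<in> baseF q \<Longrightarrow> s (x::'a::field) = x"
  and Gal_inj: "s \<in> Gal q \<Longrightarrow> inj (s::'a::field \<Rightarrow> 'a)"
  unfolding Gal_def by (auto intro: bij_is_inj)

lemma Gal_0: "s \<in> Gal q \<Longrightarrow> s (0::'a::field) = 0"
  using Gal_add[of s q 0 0] by (metis add.right_neutral add_cancel_right_right)

lemma Gal_id: "(\<lambda>x. x) \<in> Gal q"
  unfolding Gal_def by (simp add: bij_id[unfolded id_def])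

lemma Gal_comp: "s \<in> Gal q \<Longrightarrow> t \<in> Gal q \<Longrightarrow> (\<lambda>x. s (t x)) \<in> Gal q"
  unfolding Gal_def using bij_comp[of t s] by (auto simp: comp_def)

lemma orbitI: "s \<in> Gal q \<Longrightarrow> (\<lambda>i. s (v i)) \<in> orbit q v"
  unfolding orbit_def by blast

lemma orbitE: "u \<in> orbit q v \<Longrightarrow> (\<And>s. s \<in> Gal q \<Longrightarrow> u = (\<lambda>i. s (v i)) \<Longrightarrow> P) \<Longrightarrow> P"
  unfolding orbit_def by blast

lemma orbit_self: "v \<in> orbit q v"
  using orbitI[OF Gal_id, where v = v] by simp

lemma orbit_trans:
  assumes "u \<in> orbit q v" "w \<in> orbit q u"
  shows "w \<in> orbit q v"
proof -
  obtain s t where "s \<in> Gal q" "u = (\<lambda>i. s (v i))" "t \<in> Gal q" "w = (\<lambda>i. t (u i))"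
    using assms by (elim orbitE)
  then show ?thesis
    using orbitI[OF Gal_comp[of t q s], of v] by simp
qed

lemma orbit_same_baseF_coordinates:
  assumes "u \<in> orbit q v" "c \<in> baseF q"
  shows "u i = c \<longleftrightarrow> v i = c"
proof -
  obtain s where s: "s \<in> Gal q" "u = (\<lambda>i. s (v i))"
    using assms(1) by (rule orbitE)
  have "s (v i) = s c \<longleftrightarrow> v i = c"
    using Gal_inj[OF s(1)] by (simp add: inj_eq)
  then show ?thesis
    using s Gal_fixes_baseF[OF s(1) assms(2)] by simp
qed

section \<open>Polynomial maps over the base field are Galois-equivariant\<close>

lemma polyfun_mono: "f \<in> polyfun K S \<Longrightarrow> S \<subseteq> T \<Longrightarrow> f \<in> polyfun K T"
  by (induction rule: polyfun.induct) (auto intro: polyfun.const polyfun.var polyfun.add polyfun.mult)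

lemma polyfun_sum:
  assumes "finite J" "J \<noteq> {}" "\<And>j. j \<in> J \<Longrightarrow> f j \<in> polyfun K S"
  shows "(\<lambda>v. \<Sum>j\<in>J. f j v) \<in> polyfun K S"
  using assms
proof (induction J rule: finite_ne_induct)
  case (insert x J)
  then have "(\<lambda>v. f x v + (\<Sum>j\<in>J. f j v)) \<in> polyfun K S"
    by (intro polyfun.add) simp_all
  then show ?case
    using insert by simp
qed simp

lemma polyfun_prod:
  assumes "finite J" "1 \<in> K" "\<And>j. j \<in> J \<Longrightarrow> f j \<in> polyfun K S"
  shows "(\<lambda>v. \<Prod>j\<in>J. f j v) \<in> polyfun K S"
  using assms
proof (induction J rule: finite_induct)
  case empty
  then show ?case using polyfun.const[of 1 K S] by simp
next
  case (insert x J)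
  then have "(\<lambda>v. f x v * (\<Prod>j\<in>J. f j v)) \<in> polyfun K S"
    by (intro polyfun.mult) simp_all
  then show ?case
    using insert by simp
qed

lemma polyfun_power: "f \<in> polyfun K S \<Longrightarrow> 1 \<in> K \<Longrightarrow> (\<lambda>v. f v ^ k) \<in> polyfun K S"
  by (induction k) (simp_all add: polyfun.const polyfun.mult)

lemma polyfun_poly:
  "(\<And>i. coeff p i \<in> K) \<Longrightarrow> f \<in> polyfun K S \<Longrightarrow> (\<lambda>v. poly p (f v)) \<in> polyfun K S"
proof (induction p rule: pCons_induct)
  case 0
  have "(0::'a) \<in> K" using 0 coeff_0[where 'a='a] by metis
  then show ?case using polyfun.const[of 0 K S] by simp
next
  case (pCons a p)
  have a: "a \<in> K" using pCons.prems(1)[of 0] by simp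
  have "coeff p i \<in> K" for i using pCons.prems(1)[of "Suc i"] by simp
  then have "(\<lambda>v. poly p (f v)) \<in> polyfun K S"
    using pCons by blast
  then have "(\<lambda>v. a + f v * poly p (f v)) \<in> polyfun K S"
    using a pCons.prems(2) by (intro polyfun.add polyfun.mult polyfun.const)
  then show ?case
    by simp
qed

lemma polyfun_Gal:
  assumes "f \<in> polyfun (baseF q) S" "s \<in> Gal q"
  shows "f (\<lambda>i. s (v i)) = s (f v)"
  using assms(1)
  by induction (auto simp: Gal_fixes_baseF[OF assms(2)] Gal_add[OF assms(2)] Gal_mult[OF assms(2)])

definition Gal_equivariant :: "nat \<Rightarrow> ((nat \<Rightarrow> 'a::field) \<Rightarrow> nat \<Rightarrow> 'a) \<Rightarrow> bool" where
  "Gal_equivariant q F \<longleftrightarrow> (\<forall>s\<in>Gal q. \<forall>v. F (\<lambda>i. s (v i)) = (\<lambda>i. s (F v i)))"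

lemma Gal_equivariant_comp:
  fixes F H :: "(nat \<Rightarrow> 'a::field) \<Rightarrow> nat \<Rightarrow> 'a"
  shows "Gal_equivariant q F \<Longrightarrow> Gal_equivariant q H \<Longrightarrow> Gal_equivariant q (F \<circ> H)"
  by (simp add: Gal_equivariant_def)

lemma polynomial_map_Gal_equivariant:
  fixes F :: "(nat \<Rightarrow> 'a::field) \<Rightarrow> nat \<Rightarrow> 'a"
  assumes "\<And>i. i < n \<Longrightarrow> (\<lambda>v. F v i) \<in> polyfun (baseF q) UNIV"
    and "\<And>v i. \<not> i < n \<Longrightarrow> F v i = 0"
  shows "Gal_equivariant q F"
  unfolding Gal_equivariant_def
proof (intro ballI allI ext)
  fix s :: "'a \<Rightarrow> 'a" and v i assume s: "s \<in> Gal q"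
  show "F (\<lambda>i. s (v i)) i = s (F v i)"
    using polyfun_Gal[OF assms(1) s, of i v] assms(2) Gal_0[OF s] by (cases "i < n") auto
qed

lemma tame_gens_Gal_equivariant:
  assumes "F \<in> tame_gens q n"
  shows "Gal_equivariant q F"
proof (cases "F \<in> affine_maps q n")
  case True
  then obtain A b where F: "F = (\<lambda>v i. if i < n then (\<Sum>j<n. A i j * v j) + b i else 0)"
    and A: "\<forall>i<n. \<forall>j<n. A i j \<in> baseF q" and b: "\<forall>i<n. b i \<in> baseF q"
    unfolding affine_maps_def by blast
  show ?thesis
  proof (rule polynomial_map_Gal_equivariant)
    fix i assume i: "i < n"
    have "(\<lambda>v. \<Sum>j<n. A i j * v j) \<in> polyfun (baseF q) UNIV"
      using i A by (intro polyfun_sum polyfun.mult polyfun.const polyfun.var) auto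
    then show "(\<lambda>v. F v i) \<in> polyfun (baseF q) UNIV"
      using i b by (simp add: F polyfun.add polyfun.const)
  qed (simp add: F)
next
  case False
  then obtain a f where F: "F = (\<lambda>v i. if i < n then a i * v i + f i v else 0)"
    and a: "\<forall>i<n. a i \<in> baseF q" and f: "\<forall>i<n. f i \<in> polyfun (baseF q) {i+1..<n}"
    using assms unfolding tame_gens_def triangular_maps_def by blast
  show ?thesis
  proof (rule polynomial_map_Gal_equivariant)
    fix i assume i: "i < n"
    then have "f i \<in> polyfun (baseF q) UNIV"
      using f polyfun_mono by blast
    then show "(\<lambda>v. F v i) \<in> polyfun (baseF q) UNIV"
      using i a by (simp add: F polyfun.add polyfun.mult polyfun.const polyfun.var)
  qed (simp add: F)
qed

lemma Gal_equivariant_image_orbit: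
  assumes "Gal_equivariant q F"
  shows "F ` orbit q v = orbit q (F v)"
proof -
  have F: "F (\<lambda>i. s (v i)) = (\<lambda>i. s (F v i))" if "s \<in> Gal q" for s
    using assms that unfolding Gal_equivariant_def by blast
  show ?thesis
  proof (intro equalityI subsetI)
    fix u assume "u \<in> F ` orbit q v"
    then obtain w s where "u = F w" "s \<in> Gal q" "w = (\<lambda>i. s (v i))"
      by (auto elim: orbitE)
    then show "u \<in> orbit q (F v)"
      using F orbitI by simp
  next
    fix u assume "u \<in> orbit q (F v)"
    then obtain s where s: "s \<in> Gal q" "u = (\<lambda>i. s (F v i))"
      by (rule orbitE)
    then have "u = F (\<lambda>i. s (v i))"
      using F by simp
    then show "u \<in> F ` orbit q v"
      using orbitI[OF s(1)] by blast
  qed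
qed

section \<open>Finite fields and the Frobenius map\<close>

lemma sum_powers_less:
  fixes q :: nat
  assumes "q > 1"
  shows "(\<Sum>j\<in>{1..<k}. q ^ j) < q ^ k"
proof (induction k)
  case (Suc k)
  show ?case
  proof (cases "k = 0")
    case False
    then have "(\<Sum>j\<in>{1..<Suc k}. q ^ j) < q ^ k + q ^ k"
      using Suc.IH by (simp add: sum.atLeastLessThan_Suc)
    also have "\<dots> \<le> q ^ Suc k"
      using assms by (simp add: mult_2[symmetric])
    finally show ?thesis .
  qed (use assms in simp)
qed simp

locale finite_field_extension =
  fixes q m :: nat and field_type :: "'a::field itself"
  assumes finite_UNIV: "finite (UNIV :: 'a set)"
    and card_UNIV: "card (UNIV :: 'a set) = q ^ m"
    and prime_power: "\<exists>p k. prime p \<and> k > 0 \<and> q = p ^ k"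
begin

lemma CHAR_prime: "prime CHAR('a)"
  using prime_CHAR_semidom[where ?'a = 'a] finite_imp_CHAR_pos[OF finite_UNIV] by blast

lemma q_eq_CHAR_power: "\<exists>k. q = CHAR('a) ^ k"
proof -
  obtain p k where pk: "prime p" "k > 0" "q = p ^ k"
    using prime_power by blast
  have "CHAR('a) dvd p ^ (k * m)"
    using CHAR_dvd_CARD[where ?'a = 'a] card_UNIV pk by (simp add: power_mult)
  then have "CHAR('a) = p"
    using CHAR_prime pk(1) prime_dvd_power primes_dvd_imp_eq by blast
  then show ?thesis
    using pk by blast
qed

lemma q_gt_1: "q > 1"
  using prime_power by (metis one_less_power prime_gt_1_nat)

lemma card_UNIV_ge_2: "card (UNIV :: 'a set) \<ge> 2"
  using card_mono[OF finite_UNIV, of "{0, 1}"] by simp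

lemma m_pos: "m > 0"
  using card_UNIV_ge_2 card_UNIV by (cases m) auto

lemma frobenius_add: "(x + y :: 'a) ^ (q ^ j) = x ^ (q ^ j) + y ^ (q ^ j)"
proof -
  obtain k where "q ^ j = CHAR('a) ^ (k * j)"
    using q_eq_CHAR_power by (auto simp: power_mult)
  then show ?thesis
    using freshmans_dream' CHAR_prime by blast
qed

lemma frobenius_diff: "(x - y :: 'a) ^ (q ^ j) = x ^ (q ^ j) - y ^ (q ^ j)"
  using frobenius_add[of "x - y" y j] by (simp add: eq_diff_eq)

lemma power_card: "(x::'a) ^ (q ^ m) = x"
proof (cases "x = 0")
  case False
  let ?N = "card (UNIV :: 'a set)"
  have "x * (\<Prod>y\<in>UNIV-{0}. x * y) = x * x ^ (?N - 1) * \<Prod>(UNIV-{0})"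
    using finite_UNIV by (simp add: prod.distrib mult_ac)
  also have "x * x ^ (?N - 1) = x ^ ?N"
    using card_UNIV_ge_2 by (simp flip: power_Suc)
  also have "(\<Prod>y\<in>UNIV-{0}. x * y) = (\<Prod>y\<in>UNIV-{0}. y)"
    by (rule prod.reindex_bij_witness[of _ "\<lambda>y. y / x" "\<lambda>y. x * y"]) (use False in auto)
  finally show ?thesis
    using finite_UNIV card_UNIV by (simp add: prod_zero_iff)
qed (use m_pos q_gt_1 in simp)

lemma power_card_iterate: "(x::'a) ^ (q ^ (m * k)) = x"
  by (induction k) (simp_all add: power_add power_mult power_card)

lemma power_card_minus_1: "(x::'a) \<noteq> 0 \<Longrightarrow> x ^ (q ^ m - 1) = 1"
  using power_card[of x] card_UNIV_ge_2 card_UNIV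
  by (metis (no_types) Suc_diff_1 mult_cancel_left1 not_gr0 not_numeral_le_zero power_Suc)

lemma frobenius_bij: "bij (\<lambda>x::'a. x ^ (q ^ j))"
proof -
  have "inj (\<lambda>x::'a. x ^ (q ^ j))"
  proof (rule injI)
    fix x y :: 'a assume "x ^ (q ^ j) = y ^ (q ^ j)"
    then have "(x - y) ^ (q ^ j) = 0"
      by (simp add: frobenius_diff)
    then show "x = y"
      by simp
  qed
  then show ?thesis
    using finite_UNIV_inj_surj[OF finite_UNIV] by (simp add: bij_def)
qed

lemma frobenius_Gal: "(\<lambda>x::'a. x ^ (q ^ j)) \<in> Gal q"
  using frobenius_bij frobenius_add baseF_power_iterate[where 'a = 'a]
  unfolding Gal_def by (simp add: power_mult_distrib)

lemma minus_one_baseF: "(-1::'a) \<in> baseF q"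
  using frobenius_diff[of 0 1 1] q_gt_1 by (simp add: baseF_def)

lemma orbit_frobenius: "orbit q (\<lambda>i. v i ^ (q ^ j)) = orbit q (v :: nat \<Rightarrow> 'a)"
proof -
  have sub: "orbit q (\<lambda>i. u i ^ (q ^ k)) \<subseteq> orbit q u" for u :: "nat \<Rightarrow> 'a" and k
    using orbit_trans[OF orbitI[OF frobenius_Gal]] by blast
  have "j + (m * j - j) = m * j"
    using m_pos by simp
  then have "(x ^ (q ^ j)) ^ (q ^ (m * j - j)) = x" for x :: 'a
    using power_card_iterate[of x j] by (metis power_add power_mult)
  then have "(\<lambda>i. (v i ^ (q ^ j)) ^ (q ^ (m * j - j))) = v"
    by simp
  then have "orbit q v \<subseteq> orbit q (\<lambda>i. v i ^ (q ^ j))"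
    using sub[of "\<lambda>i. v i ^ (q ^ j)" "m * j - j"] by simp
  then show ?thesis
    using sub by blast
qed

lemma card_frobenius_fixed_le:
  assumes "j > 0"
  shows "card {x::'a. x ^ (q ^ j) = x} \<le> q ^ j"
proof -
  define p :: "'a poly" where "p = monom 1 (q ^ j) - monom 1 1"
  have N: "q ^ j > 1"
    using q_gt_1 assms by (metis One_nat_def one_less_power)
  then have "coeff p (q ^ j) = 1"
    by (simp add: p_def coeff_monom)
  then have "p \<noteq> 0"
    by auto
  moreover have "degree p \<le> q ^ j"
    using N unfolding p_def by (meson degree_diff_le degree_monom_le le_trans less_imp_le)
  moreover have "{x::'a. x ^ (q ^ j) = x} = {x. poly p x = 0}"
    by (auto simp: p_def poly_monom)
  ultimately show ?thesis
    using card_poly_roots_bound[of p] by simp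
qed

lemma exists_primitive_element: "\<exists>\<theta>::'a. \<forall>j. 0 < j \<and> j < m \<longrightarrow> \<theta> ^ (q ^ j) \<noteq> \<theta>"
proof (rule ccontr)
  assume "\<not> ?thesis"
  then have "UNIV = (\<Union>j\<in>{1..<m}. {x::'a. x ^ (q ^ j) = x})"
    by (fastforce simp: Suc_le_eq)
  then have "q ^ m = card (\<Union>j\<in>{1..<m}. {x::'a. x ^ (q ^ j) = x})"
    using card_UNIV by simp
  also have "\<dots> \<le> (\<Sum>j\<in>{1..<m}. card {x::'a. x ^ (q ^ j) = x})"
    by (rule card_UN_le) simp
  also have "\<dots> \<le> (\<Sum>j\<in>{1..<m}. q ^ j)"
    by (intro sum_mono card_frobenius_fixed_le) simp
  also have "\<dots> < q ^ m"
    using q_gt_1 by (rule sum_powers_less)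
  finally show False
    by simp
qed

lemma poly_map_frobenius: "poly (map_poly (\<lambda>x::'a. x ^ q) p) (y ^ q) = poly p y ^ q"
proof (induction p rule: pCons_induct)
  case (pCons a p)
  then show ?case
    using frobenius_add[of _ _ 1] q_gt_1 by (simp add: map_poly_pCons power_mult_distrib)
qed (use q_gt_1 in simp)

definition zero_indicator :: "'a \<Rightarrow> 'a" where
  "zero_indicator y = 1 - y ^ (q ^ m - 1)"

lemma zero_indicator_eq: "zero_indicator y = (if y = 0 then 1 else 0)"
proof -
  have "q ^ m - 1 \<noteq> 0"
    using card_UNIV_ge_2 card_UNIV by simp
  then show ?thesis
    unfolding zero_indicator_def using power_card_minus_1[of y] by auto
qed

lemma polyfun_zero_indicator:
  assumes "f \<in> polyfun (baseF q) S"
  shows "(\<lambda>v. zero_indicator (f v)) \<in> polyfun (baseF q) S"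
proof -
  have "(\<lambda>v. 1 + (-1) * f v ^ (q ^ m - 1)) \<in> polyfun (baseF q) S"
    by (intro polyfun.add polyfun.const polyfun.mult polyfun_power assms minus_one_baseF baseF_1)
  then show ?thesis
    by (simp add: zero_indicator_def)
qed

end

section \<open>The conjugates of a primitive element\<close>

lemma prod_lessThan_rotate:
  fixes f :: "nat \<Rightarrow> 'a::comm_monoid_mult"
  assumes "f n = f 0"
  shows "(\<Prod>j<n. f (Suc j)) = (\<Prod>j<n. f j)"
proof (cases n)
  case (Suc k)
  have "(\<Prod>j<n. f (Suc j)) = (\<Prod>j<k. f (Suc j)) * f n"
    by (simp add: Suc)
  also have "\<dots> = (\<Prod>j<n. f j)"
    unfolding Suc prod.lessThan_Suc_shift using assms Suc by (simp add: mult.commute)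
  finally show ?thesis .
qed simp

locale finite_field_primitive = finite_field_extension q m field_type
  for q m :: nat and field_type :: "'a::field itself" +
  fixes \<theta> :: 'a
  assumes primitive: "\<And>j. 0 < j \<Longrightarrow> j < m \<Longrightarrow> \<theta> ^ (q ^ j) \<noteq> \<theta>"
begin

definition conjugates :: "'a set" where
  "conjugates = (\<lambda>j. \<theta> ^ (q ^ j)) ` {..<m}"

lemma theta_in_conjugates: "\<theta> \<in> conjugates"
  using m_pos image_eqI[of \<theta> "\<lambda>j. \<theta> ^ (q ^ j)" 0 "{..<m}"] by (simp add: conjugates_def)

lemma card_conjugates: "card conjugates = m"
proof -
  have distinct: False if "i < j" "j < m" "\<theta> ^ (q ^ i) = \<theta> ^ (q ^ j)" for i j
  proof -
    have "\<theta> ^ (q ^ (i + (m - j))) = (\<theta> ^ (q ^ i)) ^ (q ^ (m - j))"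
      by (simp only: power_add power_mult)
    also have "\<dots> = \<theta> ^ (q ^ (j + (m - j)))"
      unfolding that(3) by (simp only: power_add power_mult)
    also have "\<dots> = \<theta>"
      using that(2) power_card by simp
    finally have "\<theta> ^ (q ^ (i + (m - j))) = \<theta>" .
    moreover have "0 < i + (m - j)" "i + (m - j) < m"
      using that by auto
    ultimately show False
      using primitive[of "i + (m - j)"] by simp
  qed
  have "inj_on (\<lambda>j. \<theta> ^ (q ^ j)) {..<m}"
  proof (rule inj_onI)
    fix i j assume "i \<in> {..<m}" "j \<in> {..<m}" "\<theta> ^ (q ^ i) = \<theta> ^ (q ^ j)"
    then show "i = j"
      using distinct[of i j] distinct[of j i] by (cases i j rule: linorder_cases) auto
  qed
  then show ?thesis
    by (simp add: conjugates_def card_image)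
qed

definition conj_poly :: "'a poly" where
  "conj_poly = (\<Prod>j<m. [:- (\<theta> ^ (q ^ j)), 1:])"

lemma poly_conj_poly: "poly conj_poly y = (\<Prod>j<m. y - \<theta> ^ (q ^ j))"
  by (simp add: conj_poly_def poly_prod)

lemma poly_conj_poly_eq_0_iff: "poly conj_poly y = 0 \<longleftrightarrow> y \<in> conjugates"
  by (auto simp: poly_conj_poly conjugates_def)

lemma degree_conj_poly: "degree conj_poly \<le> m"
proof -
  have "degree conj_poly \<le> sum (degree \<circ> (\<lambda>j. [:- (\<theta> ^ (q ^ j)), 1:])) {..<m}"
    unfolding conj_poly_def by (rule degree_prod_sum_le) simp
  then show ?thesis
    by simp
qed

text \<open>The Frobenius map permutes the roots of \<open>conj_poly\<close> cyclically, so applying it to the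
  coefficients leaves the polynomial function, and hence (by degree) the polynomial, unchanged.\<close>

lemma coeff_conj_poly_baseF: "coeff conj_poly i \<in> baseF q"
proof -
  let ?\<phi> = "\<lambda>x::'a. x ^ q"
  have "poly (map_poly ?\<phi> conj_poly) z = poly conj_poly z" for z
  proof -
    obtain y where y: "z = y ^ q"
      using frobenius_bij[of 1] by (auto simp: bij_def surj_def)
    have "poly (map_poly ?\<phi> conj_poly) z = (\<Prod>j<m. (y - \<theta> ^ (q ^ j)) ^ q)"
      by (simp add: y poly_map_frobenius poly_conj_poly prod_power_distrib)
    also have "\<dots> = (\<Prod>j<m. z - \<theta> ^ (q ^ Suc j))"
      using frobenius_diff[of y _ 1] by (simp add: y mult.commute flip: power_mult)
    also have "\<dots> = (\<Prod>j<m. z - \<theta> ^ (q ^ j))"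
      by (rule prod_lessThan_rotate) (simp add: power_card)
    finally show ?thesis
      by (simp add: poly_conj_poly)
  qed
  moreover have "m < card (UNIV :: 'a set)"
    using card_UNIV q_gt_1 less_exp[of m] power_mono[of 2 q m] by linarith
  moreover have "degree (map_poly ?\<phi> conj_poly) = degree conj_poly"
    by (rule degree_map_poly) simp
  ultimately have "map_poly ?\<phi> conj_poly = conj_poly"
    using degree_conj_poly by (intro poly_eqI_degree[where A = UNIV]) simp_all
  moreover have "coeff (map_poly ?\<phi> conj_poly) i = coeff conj_poly i ^ q"
    by (rule coeff_map_poly) (use q_gt_1 in simp)
  ultimately have "coeff conj_poly i ^ q = coeff conj_poly i"
    by simp
  then show ?thesis
    by (simp add: baseF_def)
qed

lemma Gal_image_theta: "s \<in> Gal q \<Longrightarrow> s \<theta> \<in> conjugates"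
proof -
  assume s: "s \<in> Gal q"
  have "(\<lambda>v. poly conj_poly (v (0::nat))) \<in> polyfun (baseF q) UNIV"
    by (intro polyfun_poly coeff_conj_poly_baseF polyfun.var) simp
  from polyfun_Gal[OF this s, of "\<lambda>_. \<theta>"]
  have "poly conj_poly (s \<theta>) = s (poly conj_poly \<theta>)" .
  also have "poly conj_poly \<theta> = 0"
    using theta_in_conjugates by (simp add: poly_conj_poly_eq_0_iff)
  finally show ?thesis
    by (simp add: Gal_0[OF s] flip: poly_conj_poly_eq_0_iff)
qed

end

section \<open>A tame commutator acting as a 3-cycle\<close>

locale three_cycle_construction = finite_field_primitive q m field_type \<theta>
  for q m :: nat and field_type :: "'a::field itself" and \<theta> :: 'a +
  fixes n :: nat
  assumes n_ge_3: "n \<ge> 3"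
begin

text \<open>Coordinates are indexed from \<open>0\<close>, so the slice consists of the vectors
  \<open>(a, b, 0, ..., 0, t)\<close> with \<open>t\<close> in position \<open>n - 1\<close> a conjugate of \<open>\<theta>\<close>.\<close>

definition in_slice :: "(nat \<Rightarrow> 'a) \<Rightarrow> bool" where
  "in_slice v \<longleftrightarrow> (\<forall>j\<in>{2..<n-1}. v j = 0) \<and> v (n - 1) \<in> conjugates"

definition slice_indicator :: "(nat \<Rightarrow> 'a) \<Rightarrow> 'a" where
  "slice_indicator v = zero_indicator (v 1) * (\<Prod>j\<in>{2..<n-1}. zero_indicator (v j))
     * zero_indicator (poly conj_poly (v (n - 1)))"

lemma slice_indicator_eq: "slice_indicator v = (if v 1 = 0 \<and> in_slice v then 1 else 0)"
proof -
  have "(\<Prod>j\<in>J. zero_indicator (v j)) = (if \<forall>j\<in>J. v j = 0 then 1 else 0)" if "finite J" for J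
    using that by (induction J rule: finite_induct) (auto simp: zero_indicator_eq)
  then show ?thesis
    by (simp add: slice_indicator_def in_slice_def zero_indicator_eq poly_conj_poly_eq_0_iff)
qed

lemma polyfun_slice_indicator: "slice_indicator \<in> polyfun (baseF q) {1..<n}"
proof -
  have var: "(\<lambda>v. v j) \<in> polyfun (baseF q) {1..<n}" if "1 \<le> j" "j < n" for j
    using that by (intro polyfun.var) simp
  have "(\<lambda>v. zero_indicator (v 1) * (\<Prod>j\<in>{2..<n-1}. zero_indicator (v j))
      * zero_indicator (poly conj_poly (v (n - 1)))) \<in> polyfun (baseF q) {1..<n}"
    using n_ge_3
    by (intro polyfun.mult polyfun_prod polyfun_zero_indicator polyfun_poly coeff_conj_poly_baseF
        var baseF_1 finite_atLeastLessThan) auto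
  then show ?thesis
    unfolding slice_indicator_def[abs_def] .
qed

definition shear :: "'a \<Rightarrow> (nat \<Rightarrow> 'a) \<Rightarrow> nat \<Rightarrow> 'a" where
  "shear c v = (\<lambda>i. if i < n then v i + (if i = 0 then c * slice_indicator v else 0) else 0)"

lemma shear_tame:
  assumes "c \<in> baseF q"
  shows "shear c \<in> tame_gens q n"
proof -
  define f where "f i = (if i = 0 then (\<lambda>v. c * slice_indicator v) else (\<lambda>v. 0))" for i :: nat
  have "f i \<in> polyfun (baseF q) {i+1..<n}" for i
    using polyfun.mult[OF polyfun.const[OF assms] polyfun_slice_indicator] q_gt_1
    by (simp add: f_def polyfun.const)
  moreover have "shear c = (\<lambda>v i. if i < n then 1 * v i + f i v else 0)"
    by (auto simp: shear_def f_def fun_eq_iff)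
  ultimately have "shear c \<in> triangular_maps q n"
    unfolding triangular_maps_def by (intro CollectI exI[of _ "\<lambda>_. 1"] exI[of _ f]) simp
  then show ?thesis
    by (simp add: tame_gens_def)
qed

definition swap_index :: "nat \<Rightarrow> nat" where
  "swap_index i = (if i = 0 then 1 else if i = 1 then 0 else i)"

definition swap01 :: "(nat \<Rightarrow> 'a) \<Rightarrow> nat \<Rightarrow> 'a" where
  "swap01 v = (\<lambda>i. if i < n then v (swap_index i) else 0)"

lemma swap_index_less: "i < n \<Longrightarrow> swap_index i < n"
  using n_ge_3 by (simp add: swap_index_def)

lemma swap01_tame: "swap01 \<in> tame_gens q n"
proof -
  define A where "A i j = (if j = swap_index i then 1 else 0 :: 'a)" for i j
  let ?lin = "\<lambda>v i. if i < n then (\<Sum>j<n. A i j * v j) else 0"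
  let ?W = "{v \<in> vecs n. \<forall>i. v i \<in> baseF q}"
  have "(\<Sum>j<n. A i j * v j) = v (swap_index i)" if "i < n" for i v
  proof -
    have "(\<Sum>j<n. A i j * v j) = (\<Sum>j<n. if j = swap_index i then v j else 0)"
      by (intro sum.cong) (auto simp: A_def)
    then show ?thesis
      using swap_index_less[OF that] by simp
  qed
  then have lin: "?lin = swap01"
    by (auto simp: fun_eq_iff swap01_def)
  have "swap01 (swap01 v) = v" if "v \<in> vecs n" for v
    using that swap_index_less by (auto simp: fun_eq_iff swap01_def vecs_def swap_index_def)
  moreover have "swap01 ` ?W \<subseteq> ?W"
    using q_gt_1 by (auto simp: swap01_def vecs_def)
  ultimately have "bij_betw ?lin ?W ?W"
    unfolding lin by (intro bij_betw_byWitness[where f' = swap01]) auto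
  moreover have "\<forall>i<n. \<forall>j<n. A i j \<in> baseF q"
    using q_gt_1 by (simp add: A_def)
  moreover have "swap01 = (\<lambda>v i. if i < n then (\<Sum>j<n. A i j * v j) + 0 else 0)"
    unfolding lin[symmetric] by (simp add: fun_eq_iff)
  ultimately have "swap01 \<in> affine_maps q n"
    unfolding affine_maps_def using q_gt_1 by force
  then show ?thesis
    by (simp add: tame_gens_def)
qed

lemma in_slice_upd: "i < 2 \<Longrightarrow> in_slice (v(i := x)) = in_slice v"
  using n_ge_3 by (auto simp: in_slice_def)

lemma shear_upd:
  assumes "v \<in> vecs n"
  shows "shear c (v(0 := a, 1 := b)) = v(0 := a + (if b = 0 \<and> in_slice v then c else 0), 1 := b)"
  using assms n_ge_3 by (auto simp: fun_eq_iff shear_def slice_indicator_eq in_slice_upd vecs_def)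

lemma swap01_upd:
  assumes "v \<in> vecs n"
  shows "swap01 (v(0 := a, 1 := b)) = v(0 := b, 1 := a)"
  using assms n_ge_3 by (auto simp: fun_eq_iff swap01_def swap_index_def vecs_def)

text \<open>With \<open>\<alpha> = shear 1\<close> and \<open>\<beta> = swap01 \<circ> \<alpha> \<circ> swap01\<close> this is the commutator
  \<open>\<alpha> \<beta> \<alpha>\<inverse> \<beta>\<inverse>\<close>.\<close>

definition commutator_map :: "(nat \<Rightarrow> 'a) \<Rightarrow> nat \<Rightarrow> 'a" where
  "commutator_map = shear 1 \<circ> swap01 \<circ> shear 1 \<circ> swap01 \<circ> shear (-1) \<circ> swap01 \<circ> shear (-1) \<circ> swap01"

definition cycle3 :: "'a \<times> 'a \<Rightarrow> 'a \<times> 'a" where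
  "cycle3 p = (if p = (0, 0) then (1, 0) else if p = (1, 0) then (0, 1) else if p = (0, 1) then (0, 0) else p)"

lemma commutator_map_upd:
  assumes "v \<in> vecs n"
  shows "commutator_map (v(0 := a, 1 := b)) =
    (if in_slice v then v(0 := fst (cycle3 (a, b)), 1 := snd (cycle3 (a, b))) else v(0 := a, 1 := b))"
  using assms by (simp add: commutator_map_def shear_upd swap01_upd cycle3_def del: One_nat_def)

lemma commutator_map_Gal_equivariant: "Gal_equivariant q commutator_map"
proof -
  have "Gal_equivariant q (shear c)" if "c \<in> baseF q" for c
    using tame_gens_Gal_equivariant[OF shear_tame[OF that]] .
  moreover have "Gal_equivariant q swap01"
    using tame_gens_Gal_equivariant[OF swap01_tame] .
  ultimately show ?thesis
    unfolding commutator_map_def by (intro Gal_equivariant_comp) (simp_all add: minus_one_baseF)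
qed

lemma image_commutator_map_in_Gimg: "(\<lambda>Y. commutator_map ` Y) \<in> Gimg q n"
proof -
  have "(\<lambda>Y. shear 1 ` swap01 ` shear 1 ` swap01 ` shear (-1) ` swap01 ` shear (-1) ` swap01 ` Y)
      \<in> Gimg q n"
    by (intro Gimg.step Gimg.id shear_tame swap01_tame baseF_1 minus_one_baseF)
  then show ?thesis
    by (simp add: commutator_map_def image_comp)
qed

definition slice_base :: "nat \<Rightarrow> 'a" where
  "slice_base = (\<lambda>i. if i = n - 1 then \<theta> else 0)"

definition slice_point :: "'a \<Rightarrow> 'a \<Rightarrow> nat \<Rightarrow> 'a" where
  "slice_point a b = slice_base(0 := a, 1 := b)"

lemma slice_base_vecs: "slice_base \<in> vecs n"
  using n_ge_3 by (auto simp: slice_base_def vecs_def)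

lemma in_slice_slice_base: "in_slice slice_base"
  using theta_in_conjugates by (auto simp: in_slice_def slice_base_def)

lemma slice_point_vecs: "slice_point a b \<in> vecs n"
  using n_ge_3 by (auto simp: slice_point_def slice_base_def vecs_def)

lemma orbit_slice_point:
  assumes "a \<in> baseF q" "b \<in> baseF q"
  shows "orbit q (slice_point a b) = (\<lambda>t. (slice_point a b)(n - 1 := t)) ` conjugates"
proof -
  have n: "n - 1 \<noteq> 0" "n - 1 \<noteq> 1"
    using n_ge_3 by auto
  have conj: "(\<lambda>i. s (slice_point a b i)) = (slice_point a b)(n - 1 := s \<theta>)" if "s \<in> Gal q" for s
    using that assms n q_gt_1 Gal_fixes_baseF[OF that] by (auto simp: fun_eq_iff slice_point_def slice_base_def)
  show ?thesis
  proof (intro equalityI subsetI)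
    fix u assume "u \<in> orbit q (slice_point a b)"
    then obtain s where s: "s \<in> Gal q" "u = (slice_point a b)(n - 1 := s \<theta>)"
      by (auto elim!: orbitE simp only: conj)
    then show "u \<in> (\<lambda>t. (slice_point a b)(n - 1 := t)) ` conjugates"
      using Gal_image_theta by blast
  next
    fix u assume "u \<in> (\<lambda>t. (slice_point a b)(n - 1 := t)) ` conjugates"
    then obtain j where "u = (slice_point a b)(n - 1 := \<theta> ^ (q ^ j))"
      by (auto simp: conjugates_def)
    then show "u \<in> orbit q (slice_point a b)"
      using conj[OF frobenius_Gal[of j]] orbitI[OF frobenius_Gal[of j], where v = "slice_point a b"]
      by simp
  qed
qed

lemma orbit_slice_point_in_Xbar:
  assumes "a \<in> baseF q" "b \<in> baseF q"
  shows "orbit q (slice_point a b) \<in> Xbar q m n"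
proof -
  have "inj_on (\<lambda>t. (slice_point a b)(n - 1 := t)) conjugates"
    by (intro inj_onI) (drule fun_cong[of _ _ "n - 1"], simp)
  then have "card (orbit q (slice_point a b)) = m"
    using orbit_slice_point[OF assms] card_conjugates by (simp add: card_image)
  then show ?thesis
    using slice_point_vecs by (auto simp: Xbar_def Xset_def)
qed

lemma orbit_in_slice:
  assumes "v \<in> vecs n" "in_slice v" "v 0 \<in> baseF q" "v 1 \<in> baseF q"
  shows "orbit q v = orbit q (slice_point (v 0) (v 1))"
proof -
  obtain j where j: "v (n - 1) = \<theta> ^ (q ^ j)"
    using assms(2) by (auto simp: in_slice_def conjugates_def)
  have "v i = slice_point (v 0) (v 1) i ^ (q ^ j)" for i
  proof -
    consider "i < 2" | "i = n - 1" | "i \<in> {2..<n-1}" | "i \<ge> n"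
      by fastforce
    then show ?thesis
    proof cases
      case 1
      then show ?thesis
        using n_ge_3 baseF_power_iterate[OF assms(3)] baseF_power_iterate[OF assms(4)]
        by (auto simp: slice_point_def slice_base_def less_2_cases_iff)
    next
      case 2
      then show ?thesis
        using n_ge_3 j by (auto simp: slice_point_def slice_base_def)
    next
      case 3
      then show ?thesis
        using assms(2) q_gt_1 by (auto simp: slice_point_def slice_base_def in_slice_def)
    next
      case 4
      then show ?thesis
        using assms(1) q_gt_1 n_ge_3 by (auto simp: slice_point_def slice_base_def vecs_def)
    qed
  qed
  then have "orbit q v = orbit q (\<lambda>i. slice_point (v 0) (v 1) i ^ (q ^ j))"
    by (intro arg_cong[where f = "orbit q"] ext)
  also have "\<dots> = orbit q (slice_point (v 0) (v 1))"
    by (rule orbit_frobenius)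
  finally show ?thesis .
qed

lemma commutator_map_slice_point:
  "commutator_map (slice_point a b) = slice_point (fst (cycle3 (a, b))) (snd (cycle3 (a, b)))"
  using commutator_map_upd[OF slice_base_vecs] in_slice_slice_base by (simp add: slice_point_def)

lemma commutator_map_fixes:
  assumes "v \<in> vecs n" "\<not> (in_slice v \<and> (v 0, v 1) \<in> {(0, 0), (1, 0), (0, 1)})"
  shows "commutator_map v = v"
  using commutator_map_upd[OF assms(1), of "v 0" "v 1"] assms(2) by (auto simp: cycle3_def)

lemma orbit_slice_point_eqD:
  assumes "orbit q (slice_point a b) = orbit q (slice_point a' b')"
  shows "a = 1 \<longleftrightarrow> a' = 1" "b = 1 \<longleftrightarrow> b' = 1"
proof -
  have "slice_point a b \<in> orbit q (slice_point a' b')"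
    using orbit_self[of "slice_point a b" q] unfolding assms .
  from orbit_same_baseF_coordinates[OF this baseF_1, of 0] orbit_same_baseF_coordinates[OF this baseF_1, of 1]
  show "a = 1 \<longleftrightarrow> a' = 1" "b = 1 \<longleftrightarrow> b' = 1"
    by (simp_all add: slice_point_def)
qed

theorem commutator_is_3cycle: "is_3cycle_on (Xbar q m n) (\<lambda>Y. commutator_map ` Y)"
proof -
  define A B C where "A = orbit q (slice_point 0 0)" and "B = orbit q (slice_point 1 0)"
    and "C = orbit q (slice_point 0 1)"
  have image: "commutator_map ` orbit q v = orbit q (commutator_map v)" for v
    by (rule Gal_equivariant_image_orbit[OF commutator_map_Gal_equivariant])
  have in_Xbar: "A \<in> Xbar q m n" "B \<in> Xbar q m n" "C \<in> Xbar q m n"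
    unfolding A_def B_def C_def using q_gt_1 by (auto intro: orbit_slice_point_in_Xbar)
  have distinct: "A \<noteq> B" "B \<noteq> C" "A \<noteq> C"
    unfolding A_def B_def C_def
    using orbit_slice_point_eqD(1)[of 0 0 1 0] orbit_slice_point_eqD(1)[of 1 0 0 1]
      orbit_slice_point_eqD(2)[of 0 0 0 1] by auto
  have cycle: "commutator_map ` A = B" "commutator_map ` B = C" "commutator_map ` C = A"
    unfolding A_def B_def C_def image commutator_map_slice_point by (simp_all add: cycle3_def)
  have fixed: "commutator_map ` Z = Z" if Z: "Z \<in> Xbar q m n - {A, B, C}" for Z
  proof -
    obtain v where v: "v \<in> vecs n" "Z = orbit q v"
      using Z by (auto simp: Xbar_def Xset_def)
    have "\<not> (in_slice v \<and> (v 0, v 1) \<in> {(0, 0), (1, 0), (0, 1)})"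
    proof
      assume "in_slice v \<and> (v 0, v 1) \<in> {(0, 0), (1, 0), (0, 1)}"
      then have "Z \<in> {A, B, C}"
        using orbit_in_slice[OF v(1)] q_gt_1 by (auto simp: v(2) A_def B_def C_def)
      then show False
        using Z by blast
    qed
    then show ?thesis
      using commutator_map_fixes[OF v(1)] image v(2) by simp
  qed
  show ?thesis
    unfolding is_3cycle_on_def
    by (intro bexI[OF _ in_Xbar(1)] bexI[OF _ in_Xbar(2)] bexI[OF _ in_Xbar(3)] conjI distinct cycle
        ballI fixed)
qed

end

theorem mainTheorem10:
  fixes q m n :: nat
  assumes "\<exists>p k. prime p \<and> k > 0 \<and> q = p ^ k"
    and "finite (UNIV :: ('a::field) set)" and "card (UNIV :: 'a set) = q ^ m"
    and "n \<ge> 3"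
  shows "\<exists>g \<in> (Gimg q n :: (((nat \<Rightarrow> 'a) set \<Rightarrow> (nat \<Rightarrow> 'a) set) set)).
           is_3cycle_on (Xbar q m n) g"
proof -
  interpret finite_field_extension q m "TYPE('a)"
    using assms by unfold_locales auto
  obtain \<theta> :: 'a where "\<And>j. 0 < j \<Longrightarrow> j < m \<Longrightarrow> \<theta> ^ (q ^ j) \<noteq> \<theta>"
    using exists_primitive_element by blast
  then interpret three_cycle_construction q m "TYPE('a)" \<theta> n
    using assms by unfold_locales auto
  show ?thesis
    using image_commutator_map_in_Gimg commutator_is_3cycle by blast
qed

end
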